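(* Let $n\ge2$, let $P$ be a partial $n$-Metric on a set $X$, let $x_o\in X$ and let $f:X\to X$. Let $r\in\mathbb{R}$ and let $\varphi:[r,+\infty)\to[0,+\infty)$ be a non-decreasing function with $\varphi(t)=0$ if and only if $t=r$. Suppose that for all natural numbers $i,j$, $$r\le P(\langle f^i(x_o)\rangle^n)\quad\text{and}\quad P(\langle f^{i+1}(x_o)\rangle^{n-1},f^{j+1}(x_o))\le P(\langle f^i(x_o)\rangle^{n-1},f^j(x_o))-\varphi\big(P(\langle f^i(x_o)\rangle^{n-1},f^j(x_o))\big)$$ (i.e. $f$ is an orbital $\varphi_r$-contraction at $x_o$). Then the orbit $\{f^i(x_o)\}_{i\in\mathbb{N}}$ is a Cauchy sequence (i.e. $f$ is a Cauchy function at $x_o$).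
   Context: Notation: $\langle a\rangle^k$ denotes the $k$-tuple $(a,\dots,a)$ inserted into an argument list; $f^0(x_o)=x_o$, $f^{i+1}(x_o)=f(f^i(x_o))$. A partial $n$-Metric on $X$ is a function $P:X^n\to\mathbb{R}$ such that for all $x_1,\dots,x_n,a\in X$: (1) $P(\langle x_1\rangle^n)\le P(\langle x_1\rangle^{n-1},x_2)$; (2) $P$ is invariant under permutations of its arguments; (3) $P(\langle x_1\rangle^{n-1},x_2)=P(\langle x_1\rangle^n)$ and $P(\langle x_2\rangle^{n-1},x_1)=P(\langle x_2\rangle^n)$ iff $x_1=x_2$; (4) $P(x_1,\dots,x_n)\le P(x_1,\dots,x_{n-1},a)+P(\langle a\rangle^{n-1},x_n)-P(\langle a\rangle^n)$. A sequence $\{x_i\}$ is Cauchy if there is $r'\in\mathbb{R}$ (its central distance) such that for every $\epsilon>0$ there is $N$ with $|P(x_{i_1},\dots,x_{i_n})-r'|<\epsilon$ for all $i_1,\dots,i_n>N$. *)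

theory Defs
  imports Complex_Main "HOL-Library.Multiset"
begin

text \<open>A partial n-metric on a set X. Arguments of P are given as a list of length n;
  the k-fold repetition of a is replicate k a.\<close>
definition partial_n_metric :: "nat \<Rightarrow> 'a set \<Rightarrow> ('a list \<Rightarrow> real) \<Rightarrow> bool" where
  "partial_n_metric n X P \<longleftrightarrow>
     (\<forall>x1\<in>X. \<forall>x2\<in>X. P (replicate n x1) \<le> P (replicate (n - 1) x1 @ [x2])) \<and>
     (\<forall>xs ys. set xs \<subseteq> X \<longrightarrow> length xs = n \<longrightarrow> mset ys = mset xs \<longrightarrow> P ys = P xs) \<and>
     (\<forall>x1\<in>X. \<forall>x2\<in>X.
        (P (replicate (n - 1) x1 @ [x2]) = P (replicate n x1) \<and>
         P (replicate (n - 1) x2 @ [x1]) = P (replicate n x2)) \<longleftrightarrow> x1 = x2) \<and>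
     (\<forall>xs a. set xs \<subseteq> X \<longrightarrow> length xs = n \<longrightarrow> a \<in> X \<longrightarrow>
        P xs \<le> P (butlast xs @ [a]) + P (replicate (n - 1) a @ [last xs]) - P (replicate n a))"

definition pnm_cauchy :: "nat \<Rightarrow> ('a list \<Rightarrow> real) \<Rightarrow> (nat \<Rightarrow> 'a) \<Rightarrow> bool" where
  "pnm_cauchy n P x \<longleftrightarrow>
     (\<exists>r'::real. \<forall>\<epsilon>>0. \<exists>N::nat. \<forall>is::nat list. length is = n \<longrightarrow> (\<forall>i\<in>set is. i > N) \<longrightarrow>
        \<bar>P (map x is) - r'\<bar> < \<epsilon>)"

end

theory Submission
  imports Defs
begin

text \<open>Write \<open>D i j\<close> for \<open>P(\<langle>f\<^sup>i x\<^sub>o\<rangle>\<^sup>n\<^sup>-\<^sup>1, f\<^sup>j x\<^sub>o)\<close>. The contraction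
  shifts every diagonal of the matrix \<open>D\<close> down towards \<open>r\<close>: a sequence with
  \<open>s (k+1) \<le> s k - \<phi> (s k)\<close> and \<open>s \<ge> r\<close> tends to \<open>r\<close>, since otherwise it would
  decrease by at least \<open>\<phi>(r+\<epsilon>) > 0\<close> at every step. The three diagonals
  \<open>D k k\<close>, \<open>D k (k+1)\<close>, \<open>D (k+1) k\<close> thus become small, and the triangle inequality
  through \<open>f\<^sup>k\<^sup>+\<^sup>1 x\<^sub>o\<close> combined with one contraction step propagates the bound
  \<open>D < r + \<epsilon>\<close> to all entries beyond some index. Finally, replacing the points of an
  arbitrary \<open>n\<close>-tuple one at a time by a single orbit point, the triangle inequality shows
  that \<open>P\<close> of any tuple of late orbit points is within \<open>n\<epsilon>\<close> of \<open>r\<close>.\<close>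

lemma descent_tendsto:
  fixes s :: "nat \<Rightarrow> real"
  assumes nonneg: "\<And>t. r \<le> t \<Longrightarrow> 0 \<le> \<phi> t" and mono: "mono_on {r..} \<phi>"
    and pos: "\<And>t. r < t \<Longrightarrow> 0 < \<phi> t"
    and ge: "\<And>k. r \<le> s k" and step: "\<And>k. s (Suc k) \<le> s k - \<phi> (s k)"
  shows "s \<longlonglongrightarrow> r"
proof (rule order_tendstoI)
  fix a
  assume "a < r"
  with ge show "\<forall>\<^sub>F k in sequentially. a < s k"
    by (auto intro: always_eventually less_le_trans)
next
  fix a
  assume "r < a"
  have "s (Suc k) \<le> s k" for k
    using step[of k] nonneg[OF ge[of k]] by linarith
  then have "decseq s"
    by (rule decseq_SucI)
  obtain N where "s N < a"
  proof (rule ccontr)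
    assume "\<not> thesis"
    then have large: "a \<le> s k" for k
      using that not_less by blast
    obtain k :: nat where k: "s 0 - r < k * \<phi> a"
      using pos[OF \<open>r < a\<close>] reals_Archimedean3 by blast
    have phi_large: "\<phi> a \<le> \<phi> (s k)" for k
      using mono_onD[OF mono] large \<open>r < a\<close> by auto
    have descent: "s k \<le> s 0 - k * \<phi> a" for k
    proof (induction k)
      case (Suc k)
      then show ?case
        unfolding of_nat_Suc distrib_right using step[of k] phi_large[of k] by linarith
    qed simp
    show False
      using k ge[of k] descent[of k] by linarith
  qed
  with \<open>decseq s\<close> show "\<forall>\<^sub>F k in sequentially. s k < a"
    unfolding eventually_sequentially decseq_def by (meson le_less_trans)
qed

lemma contractive_kernel_eventually_lt:
  fixes D :: "nat \<Rightarrow> nat \<Rightarrow> real"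
  assumes nonneg: "\<And>t. r \<le> t \<Longrightarrow> 0 \<le> \<phi> t" and mono: "mono_on {r..} \<phi>"
    and pos: "\<And>t. r < t \<Longrightarrow> 0 < \<phi> t"
    and ge: "\<And>i j. r \<le> D i j"
    and contr: "\<And>i j. D (Suc i) (Suc j) \<le> D i j - \<phi> (D i j)"
    and triangle: "\<And>i j k. D i j \<le> D i k + D k j - D k k"
    and "0 < \<epsilon>"
  shows "\<exists>N. \<forall>i\<ge>N. \<forall>j\<ge>N. D i j < r + \<epsilon>"
proof -
  define \<delta> where "\<delta> = min (\<phi> (r + \<epsilon> / 2)) (\<epsilon> / 2)"
  have "0 < \<delta>" "\<delta> \<le> \<epsilon> / 2"
    using pos \<open>0 < \<epsilon>\<close> by (simp_all add: \<delta>_def)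
  have contr_below: "D (Suc i) (Suc j) < r + \<epsilon> - \<delta>" if "D i j < r + \<epsilon>" for i j
  proof (cases "r + \<epsilon> / 2 \<le> D i j")
    case True
    then have "\<delta> \<le> \<phi> (D i j)"
      using mono_onD[OF mono, of "r + \<epsilon> / 2" "D i j"] \<open>0 < \<epsilon>\<close> by (simp add: \<delta>_def)
    then show ?thesis
      using contr[of i j] that by linarith
  next
    case False
    then show ?thesis
      using contr[of i j] nonneg[OF ge[of i j]] \<open>\<delta> \<le> \<epsilon> / 2\<close> by linarith
  qed
  have "(\<lambda>k. D k k) \<longlonglongrightarrow> r" "(\<lambda>k. D k (Suc k)) \<longlonglongrightarrow> r" "(\<lambda>k. D (Suc k) k) \<longlonglongrightarrow> r"
    by (rule descent_tendsto[OF nonneg mono pos]; simp add: ge contr)+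
  then have "\<forall>\<^sub>F k in sequentially. D k k < r + \<delta> \<and> D k (Suc k) < r + \<delta> \<and> D (Suc k) k < r + \<delta>"
    using \<open>0 < \<delta>\<close> by (intro eventually_conj order_tendstoD(2)) auto
  then obtain N where N: "\<And>k. N \<le> k \<Longrightarrow> D k k < r + \<delta> \<and> D k (Suc k) < r + \<delta> \<and> D (Suc k) k < r + \<delta>"
    unfolding eventually_sequentially by blast
  have off_diagonal: "D k (k + m) < r + \<epsilon> \<and> D (k + m) k < r + \<epsilon>" if "N \<le> k" for k m
  proof (induction m)
    case 0
    then show ?case
      using N[OF that] \<open>\<delta> \<le> \<epsilon> / 2\<close> \<open>0 < \<epsilon>\<close> by simp
  next
    case (Suc m)
    \<comment> \<open>pass through \<open>k + 1\<close>: two entries below \<open>r + \<delta>\<close>, one shifted entry below \<open>r + \<epsilon> - \<delta>\<close>\<close>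
    have "D k (k + Suc m) \<le> D k (Suc k) + D (Suc k) (Suc (k + m)) - D (Suc k) (Suc k)"
      "D (k + Suc m) k \<le> D (Suc (k + m)) (Suc k) + D (Suc k) k - D (Suc k) (Suc k)"
      using triangle by simp_all
    then show ?case
      using N[OF that] Suc.IH contr_below[of k "k + m"] contr_below[of "k + m" k] ge[of "Suc k" "Suc k"]
      by linarith
  qed
  show ?thesis
  proof (intro exI allI impI)
    fix i j
    assume "N \<le> i" "N \<le> j"
    then show "D i j < r + \<epsilon>"
      using off_diagonal[of i "j - i"] off_diagonal[of j "i - j"] by (cases "i \<le> j") auto
  qed
qed

locale partial_n_metric_space =
  fixes n :: nat and X :: "'a set" and P :: "'a list \<Rightarrow> real"
  assumes partial_n_metric: "partial_n_metric n X P"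
begin

lemma permute:
  assumes "set xs \<subseteq> X" "length xs = n" "mset ys = mset xs"
  shows "P ys = P xs"
  using partial_n_metric assms unfolding partial_n_metric_def by blast

lemma diagonal_le:
  assumes "a \<in> X" "b \<in> X"
  shows "P (replicate n a) \<le> P (replicate (n - 1) a @ [b])"
  using partial_n_metric assms unfolding partial_n_metric_def by blast

lemma triangle:
  assumes "set xs \<subseteq> X" "length xs = n" "a \<in> X"
  shows "P xs \<le> P (butlast xs @ [a]) + P (replicate (n - 1) a @ [last xs]) - P (replicate n a)"
  using partial_n_metric assms unfolding partial_n_metric_def by blast

lemma triangle_snoc:
  assumes "set zs \<subseteq> X" "length zs = n - 1" "0 < n" "y \<in> X" "a \<in> X"
  shows "P (zs @ [y]) \<le> P (zs @ [a]) + P (replicate (n - 1) a @ [y]) - P (replicate n a)"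
  using triangle[of "zs @ [y]" a] assms by simp

lemma dist_to_diagonal:
  assumes "0 < n" "a \<in> X" "set ws \<subseteq> X" "length ws \<le> n"
    and "\<And>y. y \<in> set ws \<Longrightarrow>
      P (replicate (n - 1) a @ [y]) - P (replicate n a) \<le> \<eta> \<and>
      P (replicate (n - 1) y @ [a]) - P (replicate n y) \<le> \<eta>"
  shows "\<bar>P (replicate (n - length ws) a @ ws) - P (replicate n a)\<bar> \<le> real (length ws) * \<eta>"
  using assms(3-5)
proof (induction ws)
  case Nil
  then show ?case by simp
next
  case (Cons y ws)
  define zs where "zs = replicate (n - length (y # ws)) a @ ws"
  have y: "y \<in> X" and zs: "set zs \<subseteq> X" "length zs = n - 1"
    using Cons.prems \<open>a \<in> X\<close> by (auto simp: zs_def set_replicate_conv_if)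
  have "n - length ws = Suc (n - length (y # ws))"
    using Cons.prems(2) by simp
  then have "P (replicate (n - length ws) a @ ws) = P (zs @ [a])"
    using zs \<open>a \<in> X\<close> \<open>0 < n\<close> by (intro permute) (auto simp: zs_def)
  moreover have "P (replicate (n - length (y # ws)) a @ y # ws) = P (zs @ [y])"
    using zs y \<open>0 < n\<close> by (intro permute) (auto simp: zs_def)
  moreover have "P (zs @ [y]) \<le> P (zs @ [a]) + \<eta>" "P (zs @ [a]) \<le> P (zs @ [y]) + \<eta>"
    using triangle_snoc[OF zs \<open>0 < n\<close> y \<open>a \<in> X\<close>] triangle_snoc[OF zs \<open>0 < n\<close> \<open>a \<in> X\<close> y]
      Cons.prems(3)[of y] by auto
  moreover have "\<bar>P (replicate (n - length ws) a @ ws) - P (replicate n a)\<bar> \<le> real (length ws) * \<eta>"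
    using Cons by simp
  ultimately show ?case
    unfolding abs_le_iff by (simp add: distrib_right)
qed

lemma pnm_cauchy_if_entries_below:
  assumes "0 < n" and seq: "\<And>i. x i \<in> X" and ge: "\<And>i. r \<le> P (replicate n (x i))"
    and small: "\<And>\<epsilon>. 0 < \<epsilon> \<Longrightarrow> \<exists>N. \<forall>i\<ge>N. \<forall>j\<ge>N. P (replicate (n - 1) (x i) @ [x j]) < r + \<epsilon>"
  shows "pnm_cauchy n P x"
  unfolding pnm_cauchy_def
proof (rule exI[of _ r], intro allI impI)
  fix \<epsilon> :: real
  assume "0 < \<epsilon>"
  define \<eta> where "\<eta> = \<epsilon> / Suc n"
  have "0 < \<eta>"
    using \<open>0 < \<epsilon>\<close> by (simp add: \<eta>_def)
  have "Suc n * \<eta> = \<epsilon>"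
    unfolding \<eta>_def by simp
  then have "\<epsilon> = n * \<eta> + \<eta>"
    by (simp add: algebra_simps)
  obtain N where N: "\<And>i j. N \<le> i \<Longrightarrow> N \<le> j \<Longrightarrow> P (replicate (n - 1) (x i) @ [x j]) < r + \<eta>"
    using small[OF \<open>0 < \<eta>\<close>] by blast
  have diagonal: "P (replicate n (x N)) < r + \<eta>"
    using N[of N N] \<open>0 < n\<close> by (simp add: replicate_append_same flip: replicate_Suc)
  show "\<exists>N. \<forall>is. length is = n \<longrightarrow> (\<forall>i\<in>set is. N < i) \<longrightarrow> \<bar>P (map x is) - r\<bar> < \<epsilon>"
  proof (rule exI[of _ N], intro allI impI)
    fix "is" :: "nat list"
    assume len: "length is = n" and late: "\<forall>i\<in>set is. N < i"
    have "P (replicate (n - 1) (x N) @ [x i]) - P (replicate n (x N)) \<le> \<eta> \<and>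
        P (replicate (n - 1) (x i) @ [x N]) - P (replicate n (x i)) \<le> \<eta>" if "i \<in> set is" for i
      using N[of N i] N[of i N] late that ge[of N] ge[of i] by force
    then have "\<bar>P (map x is) - P (replicate n (x N))\<bar> \<le> n * \<eta>"
      using dist_to_diagonal[of "x N" "map x is" \<eta>] \<open>0 < n\<close> seq len by auto
    then show "\<bar>P (map x is) - r\<bar> < \<epsilon>"
      using diagonal ge[of N] \<open>\<epsilon> = n * \<eta> + \<eta>\<close> by (simp add: abs_le_iff abs_less_iff)
  qed
qed

lemma pnm_cauchy_if_contractive:
  assumes "0 < n"
    and nonneg: "\<And>t. r \<le> t \<Longrightarrow> 0 \<le> \<phi> t" and mono: "mono_on {r..} \<phi>"
    and pos: "\<And>t. r < t \<Longrightarrow> 0 < \<phi> t"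
    and seq: "\<And>i. x i \<in> X" and ge: "\<And>i. r \<le> P (replicate n (x i))"
    and contr: "\<And>i j. P (replicate (n - 1) (x (Suc i)) @ [x (Suc j)])
      \<le> P (replicate (n - 1) (x i) @ [x j]) - \<phi> (P (replicate (n - 1) (x i) @ [x j]))"
  shows "pnm_cauchy n P x"
proof (rule pnm_cauchy_if_entries_below[OF \<open>0 < n\<close> seq ge])
  define D where "D i j = P (replicate (n - 1) (x i) @ [x j])" for i j
  have diagonal: "D i i = P (replicate n (x i))" for i
    using \<open>0 < n\<close> by (simp add: D_def replicate_append_same flip: replicate_Suc)
  have D_ge: "r \<le> D i j" for i j
    using ge[of i] diagonal_le[OF seq seq, of i j] unfolding D_def by linarith
  have D_triangle: "D i j \<le> D i k + D k j - D k k" for i j k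
    using triangle_snoc[of "replicate (n - 1) (x i)" "x j" "x k"] \<open>0 < n\<close> seq diagonal
    by (simp add: D_def set_replicate_conv_if)
  have D_contr: "D (Suc i) (Suc j) \<le> D i j - \<phi> (D i j)" for i j
    unfolding D_def by (rule contr)
  fix \<epsilon> :: real
  assume "0 < \<epsilon>"
  from contractive_kernel_eventually_lt[where D = D, OF nonneg mono pos D_ge D_contr D_triangle this]
  show "\<exists>N. \<forall>i\<ge>N. \<forall>j\<ge>N. P (replicate (n - 1) (x i) @ [x j]) < r + \<epsilon>"
    unfolding D_def .
qed

end

theorem lemma5p12:
  fixes n :: nat and X :: "'a set" and P :: "'a list \<Rightarrow> real" and x\<^sub>o :: 'a
    and f :: "'a \<Rightarrow> 'a" and r :: real and \<phi> :: "real \<Rightarrow> real"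
  assumes "n \<ge> 2"
    and "partial_n_metric n X P"
    and "x\<^sub>o \<in> X"
    and "\<forall>x\<in>X. f x \<in> X"
    and "\<forall>s\<ge>r. \<phi> s \<ge> 0"
    and "\<forall>s\<ge>r. \<forall>t\<ge>s. \<phi> s \<le> \<phi> t"
    and "\<forall>t\<ge>r. \<phi> t = 0 \<longleftrightarrow> t = r"
    and "\<forall>i::nat. r \<le> P (replicate n ((f ^^ i) x\<^sub>o))"
    and "\<forall>i j::nat.
           P (replicate (n - 1) ((f ^^ (i + 1)) x\<^sub>o) @ [(f ^^ (j + 1)) x\<^sub>o])
           \<le> P (replicate (n - 1) ((f ^^ i) x\<^sub>o) @ [(f ^^ j) x\<^sub>o])
              - \<phi> (P (replicate (n - 1) ((f ^^ i) x\<^sub>o) @ [(f ^^ j) x\<^sub>o]))"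
  shows "pnm_cauchy n P (\<lambda>i. (f ^^ i) x\<^sub>o)"
proof -
  interpret partial_n_metric_space n X P
    using assms(2) by (rule partial_n_metric_space.intro)
  have orbit: "(f ^^ i) x\<^sub>o \<in> X" for i
    by (induction i) (use assms(3,4) in auto)
  show ?thesis
  proof (rule pnm_cauchy_if_contractive[where \<phi> = \<phi>, OF _ _ _ _ orbit])
    show "0 < n"
      using assms(1) by simp
    show "0 \<le> \<phi> t" if "r \<le> t" for t
      using assms(5) that by blast
    show "mono_on {r..} \<phi>"
      using assms(6) by (intro mono_onI) auto
    show "0 < \<phi> t" if "r < t" for t
      using assms(5,7) that by (metis less_eq_real_def less_irrefl)
    show "r \<le> P (replicate n ((f ^^ i) x\<^sub>o))" for i
      using assms(8) by blast
    show "P (replicate (n - 1) ((f ^^ Suc i) x\<^sub>o) @ [(f ^^ Suc j) x\<^sub>o])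
      \<le> P (replicate (n - 1) ((f ^^ i) x\<^sub>o) @ [(f ^^ j) x\<^sub>o])
        - \<phi> (P (replicate (n - 1) ((f ^^ i) x\<^sub>o) @ [(f ^^ j) x\<^sub>o]))" for i j
      using assms(9) unfolding Suc_eq_plus1 by blast
  qed
qed

end
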